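(* For each $0\le k\le K$ define $$v_k^-=\inf\Big(\operatorname*{argmax}_{v\in[0,q]}\Psi_k^{\mathrm{BSAA}}(v)\Big),\qquad v_k^+=\inf\Big(\operatorname*{argmax}_{v\in[q,1]}\Psi_k^{\mathrm{BSAA}}(v)\Big).$$ Then the sequences $(v_k^-)_{k=0}^K$ and $(v_k^+)_{k=0}^K$ are non-increasing in $k$.
   Context: Fix $c_u,c_o>0$ and $q=c_u/(c_u+c_o)\in(0,1)$. Fix $K\ge1$, $\bm n=(n_1,\dots,n_K)\in\mathbb N^K$, $n=\sum_k n_k$, $\sigma_k=\sum_{\ell=1}^k n_\ell$ ($\sigma_0=0$). $B_{r,m}(p)=\sum_{j=r}^m\binom mj p^j(1-p)^{m-j}$ (with $B_{r,m}\equiv1$ if $r<0$). For $v\in[0,1]$, $\Psi_k^{\mathrm{BSAA}}(v)=\big(1-B_{\lceil qn\rceil-\sigma_k,\,n-\sigma_k}(v)\big)(v-q)+(q-v)^+$. *)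

theory Defs
  imports Complex_Main
begin

definition binom_tail :: "int \<Rightarrow> nat \<Rightarrow> real \<Rightarrow> real" where
  "binom_tail r m p =
     (if r < 0 then 1
      else (\<Sum>j\<in>{nat r..m}. real (m choose j) * p ^ j * (1 - p) ^ (m - j)))"

definition sigma :: "(nat \<Rightarrow> nat) \<Rightarrow> nat \<Rightarrow> nat" where
  "sigma ns k = (\<Sum>l=1..k. ns l)"

definition Psi_BSAA :: "real \<Rightarrow> (nat \<Rightarrow> nat) \<Rightarrow> nat \<Rightarrow> nat \<Rightarrow> real \<Rightarrow> real" where
  "Psi_BSAA q ns K k v =
     (let N = sigma ns K in
      (1 - binom_tail (\<lceil>q * real N\<rceil> - int (sigma ns k)) (N - sigma ns k) v) * (v - q)
      + max (q - v) 0)"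

definition argmax_on :: "(real \<Rightarrow> real) \<Rightarrow> real set \<Rightarrow> real set" where
  "argmax_on f S = {v \<in> S. \<forall>w\<in>S. f w \<le> f v}"

end

theory Submission
  imports Defs "HOL-Analysis.Weierstrass_Theorems"
begin

text \<open>On [0,q] the objective is Psi_k(v) = B_k(v) (q - v), on [q,1] it is (1 - B_k(v)) (v - q),
where B_k = B_{r_k,m_k} with r_k = ceil(qn) - sigma_k and m_k = n - sigma_k, so passing from k to
k+1 lowers both parameters by n_{k+1}. A unit step (r+1, m+1) to (r, m) multiplies the objective by
B_{r,m} / B_{r+1,m+1}, resp. by (1 - B_{r,m}) / (1 - B_{r+1,m+1}), and both ratios are
non-increasing in v: this follows termwise from B_{r+1,m+1} = B_{r,m} - (1 - v) b_{m,r}(v) and the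
monotone likelihood ratio of the Bernstein basis b_{m,j}. Multiplying a function by a non-negative
non-increasing factor can only move its maximisers, and hence the smallest one, to the left.\<close>

lemma power_cross_le:
  fixes v w :: real
  assumes "0 \<le> v" "v \<le> w" "w \<le> 1" "a \<le> c" "d \<le> b"
  shows "v ^ c * (1 - v) ^ d * (w ^ a * (1 - w) ^ b) \<le> w ^ c * (1 - w) ^ d * (v ^ a * (1 - v) ^ b)"
proof -
  obtain k l where c: "c = a + k" and b: "b = d + l"
    using assms(4,5) le_Suc_ex by blast
  have "v ^ k * (1 - w) ^ l \<le> w ^ k * (1 - v) ^ l"
    using assms(1-3) by (intro mult_mono power_mono) auto
  then have "(v * w) ^ a * ((1 - v) * (1 - w)) ^ d * (v ^ k * (1 - w) ^ l)
    \<le> (v * w) ^ a * ((1 - v) * (1 - w)) ^ d * (w ^ k * (1 - v) ^ l)"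
    using assms(1-3) by (intro mult_left_mono) auto
  then show ?thesis
    by (simp add: c b power_add power_mult_distrib mult_ac)
qed

lemma Bernstein_Suc_Suc:
  "Bernstein (Suc m) (Suc j) x = x * Bernstein m j x + (1 - x) * Bernstein m (Suc j) x"
proof (cases "j < m")
  case True
  then obtain d where "m = Suc (j + d)"
    using less_imp_Suc_add by blast
  then show ?thesis
    by (simp add: Bernstein_def binomial_Suc_Suc algebra_simps)
next
  case False
  then show ?thesis
    by (cases "j = m") (auto simp: Bernstein_def binomial_eq_0)
qed

text \<open>Since (1 - x) b_{m,s}(x) is a constant multiple of b_{m+1,s}(x), both inequalities compare
b_{m,j} with b_{m+1,s}: their ratio is non-decreasing in x for j \<ge> s and non-increasing for j < s.\<close>

lemma Bernstein_cross_upper: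
  assumes "0 \<le> v" "v \<le> w" "w \<le> 1" "s \<le> j"
  shows "Bernstein m j v * ((1 - w) * Bernstein m s w) \<le> Bernstein m j w * ((1 - v) * Bernstein m s v)"
proof (cases "j \<le> m")
  case True
  have "v ^ j * (1 - v) ^ (m - j) * (w ^ s * (1 - w) ^ Suc (m - s))
    \<le> w ^ j * (1 - w) ^ (m - j) * (v ^ s * (1 - v) ^ Suc (m - s))"
    using assms True by (intro power_cross_le) auto
  then have "real (m choose j) * real (m choose s) * (v ^ j * (1 - v) ^ (m - j) * (w ^ s * (1 - w) ^ Suc (m - s)))
    \<le> real (m choose j) * real (m choose s) * (w ^ j * (1 - w) ^ (m - j) * (v ^ s * (1 - v) ^ Suc (m - s)))"
    by (intro mult_left_mono) auto
  then show ?thesis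
    by (simp add: Bernstein_def mult_ac)
qed (simp add: Bernstein_def binomial_eq_0)

lemma Bernstein_cross_lower:
  assumes "0 \<le> v" "v \<le> w" "w \<le> 1" "j < s"
  shows "Bernstein m j w * ((1 - v) * Bernstein m s v) \<le> Bernstein m j v * ((1 - w) * Bernstein m s w)"
proof (cases "s \<le> m")
  case True
  have "v ^ s * (1 - v) ^ Suc (m - s) * (w ^ j * (1 - w) ^ (m - j))
    \<le> w ^ s * (1 - w) ^ Suc (m - s) * (v ^ j * (1 - v) ^ (m - j))"
    using assms True by (intro power_cross_le) auto
  then have "real (m choose j) * real (m choose s) * (v ^ s * (1 - v) ^ Suc (m - s) * (w ^ j * (1 - w) ^ (m - j)))
    \<le> real (m choose j) * real (m choose s) * (w ^ s * (1 - w) ^ Suc (m - s) * (v ^ j * (1 - v) ^ (m - j)))"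
    by (intro mult_left_mono) auto
  then show ?thesis
    by (simp add: Bernstein_def mult_ac)
qed (simp add: Bernstein_def binomial_eq_0)

lemma binom_tail_of_nat: "binom_tail (int s) m x = (\<Sum>j=s..m. Bernstein m j x)"
  by (simp add: binom_tail_def Bernstein_def)

lemma binom_tail_nonpos: "r \<le> 0 \<Longrightarrow> binom_tail r m x = 1"
  by (cases "r < 0") (simp_all add: binom_tail_def atLeast0AtMost flip: Bernstein_def)

lemma one_minus_binom_tail:
  "1 - binom_tail (int s) m x = (\<Sum>j\<in>{..m} - {s..m}. Bernstein m j x)"
  by (simp add: binom_tail_of_nat sum_diff)

lemma binom_tail_Suc:
  "binom_tail (int s + 1) (Suc m) x = binom_tail (int s) m x - (1 - x) * Bernstein m s x"
proof (cases "s \<le> m")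
  case True
  have "int s + 1 = int (Suc s)"
    by simp
  then have "binom_tail (int s + 1) (Suc m) x = (\<Sum>j=s..m. Bernstein (Suc m) (Suc j) x)"
    by (simp only: binom_tail_of_nat sum.shift_bounds_cl_Suc_ivl)
  also have "\<dots> = x * (\<Sum>j=s..m. Bernstein m j x) + (1 - x) * (\<Sum>j=Suc s..Suc m. Bernstein m j x)"
    by (simp only: Bernstein_Suc_Suc sum.distrib sum_distrib_left sum.shift_bounds_cl_Suc_ivl)
  also have "(\<Sum>j=Suc s..Suc m. Bernstein m j x) = (\<Sum>j=s..m. Bernstein m j x) - Bernstein m s x"
    using True by (simp add: sum.atLeast_Suc_atMost Bernstein_def)
  finally show ?thesis
    by (simp add: binom_tail_of_nat algebra_simps)
qed (simp add: binom_tail_def Bernstein_def)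

lemma binom_tail_nonneg:
  assumes "0 \<le> x" "x \<le> 1"
  shows "0 \<le> binom_tail r m x"
proof (cases r)
  case (nonneg s)
  then show ?thesis
    using assms by (simp add: binom_tail_of_nat sum_nonneg Bernstein_nonneg)
qed (simp add: binom_tail_nonpos)

lemma binom_tail_le_1:
  assumes "0 \<le> x" "x \<le> 1"
  shows "binom_tail r m x \<le> 1"
proof (cases r)
  case (nonneg s)
  have "0 \<le> 1 - binom_tail r m x"
    unfolding nonneg one_minus_binom_tail using assms by (intro sum_nonneg Bernstein_nonneg)
  then show ?thesis
    by simp
qed (simp add: binom_tail_nonpos)

lemma binom_tail_pos:
  assumes "0 < x" "x \<le> 1" "r \<le> int m"
  shows "0 < binom_tail r m x"
proof (cases r)
  case (nonneg s)
  have "0 < Bernstein m m x"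
    using assms by (simp add: Bernstein_def)
  also have "\<dots> \<le> binom_tail r m x"
    unfolding nonneg binom_tail_of_nat using assms nonneg by (intro member_le_sum Bernstein_nonneg) auto
  finally show ?thesis .
qed (simp add: binom_tail_nonpos)

lemma binom_tail_less_1:
  assumes "0 \<le> x" "x < 1" "0 < r"
  shows "binom_tail r m x < 1"
proof -
  obtain s where r: "r = int s"
    using assms(3) zero_le_imp_eq_int by force
  have "0 < Bernstein m 0 x"
    using assms by (simp add: Bernstein_def)
  also have "\<dots> \<le> 1 - binom_tail r m x"
    unfolding r one_minus_binom_tail using assms r by (intro member_le_sum Bernstein_nonneg) auto
  finally show ?thesis
    by simp
qed

lemma continuous_on_binom_tail: "continuous_on S (binom_tail r m)"
  unfolding binom_tail_def by (cases "r < 0") (auto intro!: continuous_intros)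

lemma binom_tail_cross:
  fixes v w :: real
  assumes "0 \<le> v" "v \<le> w" "w \<le> 1"
  shows "binom_tail r m w * binom_tail (r + 1) (Suc m) v \<le> binom_tail r m v * binom_tail (r + 1) (Suc m) w"
proof (cases r)
  case (nonneg s)
  have "binom_tail r m v * ((1 - w) * Bernstein m s w) \<le> binom_tail r m w * ((1 - v) * Bernstein m s v)"
    unfolding nonneg binom_tail_of_nat sum_distrib_right
    using assms by (intro sum_mono Bernstein_cross_upper) auto
  then show ?thesis
    unfolding nonneg binom_tail_Suc by (simp add: algebra_simps)
qed (simp add: binom_tail_nonpos)

lemma one_minus_binom_tail_cross:
  fixes v w :: real
  assumes "0 \<le> v" "v \<le> w" "w \<le> 1"
  shows "(1 - binom_tail r m w) * (1 - binom_tail (r + 1) (Suc m) v)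
    \<le> (1 - binom_tail r m v) * (1 - binom_tail (r + 1) (Suc m) w)"
proof (cases r)
  case (nonneg s)
  have "(1 - binom_tail r m w) * ((1 - v) * Bernstein m s v) \<le> (1 - binom_tail r m v) * ((1 - w) * Bernstein m s w)"
    unfolding nonneg one_minus_binom_tail sum_distrib_right
    using assms by (intro sum_mono Bernstein_cross_lower) auto
  then show ?thesis
    unfolding nonneg binom_tail_Suc by (simp add: algebra_simps)
qed (simp add: binom_tail_nonpos)

lemma argmax_on_cong: "(\<And>v. v \<in> S \<Longrightarrow> f v = g v) \<Longrightarrow> argmax_on f S = argmax_on g S"
  unfolding argmax_on_def by auto

lemma argmax_on_Icc_nonempty:
  fixes a b :: real
  assumes "a \<le> b" "continuous_on {a..b} f"
  shows "argmax_on f {a..b} \<noteq> {}"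
  using continuous_attains_sup[OF compact_Icc _ assms(2)] assms(1) by (auto simp: argmax_on_def)

definition argmax_shifts_left :: "(real \<Rightarrow> real) \<Rightarrow> (real \<Rightarrow> real) \<Rightarrow> real set \<Rightarrow> bool" where
  "argmax_shifts_left f g S \<longleftrightarrow> (\<forall>v\<in>argmax_on f S. \<exists>w\<in>argmax_on g S. w \<le> v)"

lemma argmax_shifts_left_refl: "argmax_shifts_left f f S"
  unfolding argmax_shifts_left_def by blast

lemma argmax_shifts_left_trans:
  "argmax_shifts_left f g S \<Longrightarrow> argmax_shifts_left g h S \<Longrightarrow> argmax_shifts_left f h S"
  unfolding argmax_shifts_left_def by (meson order_trans)

lemma Inf_argmax_le_if_shifts_left:
  assumes "argmax_shifts_left f g S" "argmax_on f S \<noteq> {}" "bdd_below S"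
  shows "Inf (argmax_on g S) \<le> Inf (argmax_on f S)"
proof (rule cInf_greatest[OF assms(2)])
  fix v
  assume "v \<in> argmax_on f S"
  then obtain w where w: "w \<in> argmax_on g S" "w \<le> v"
    using assms(1) unfolding argmax_shifts_left_def by blast
  have "bdd_below (argmax_on g S)"
    using assms(3) by (rule bdd_below_mono) (auto simp: argmax_on_def)
  then show "Inf (argmax_on g S) \<le> v"
    using w by (meson cInf_lower order_trans)
qed

lemma argmax_shifts_left_if_cross:
  assumes nonempty: "argmax_on g S \<noteq> {}"
    and pos: "\<exists>u\<in>S. 0 < f u"
    and nonneg: "\<And>v. v \<in> S \<Longrightarrow> 0 \<le> g v"
    and cross: "\<And>v w. v \<in> S \<Longrightarrow> w \<in> S \<Longrightarrow> v \<le> w \<Longrightarrow> g w * f v \<le> g v * f w"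
  shows "argmax_shifts_left f g S"
  unfolding argmax_shifts_left_def
proof
  fix v
  assume v: "v \<in> argmax_on f S"
  then have "v \<in> S" and f_le: "\<And>u. u \<in> S \<Longrightarrow> f u \<le> f v"
    by (auto simp: argmax_on_def)
  obtain w where w: "w \<in> argmax_on g S"
    using nonempty by blast
  then have "w \<in> S" and g_le: "\<And>u. u \<in> S \<Longrightarrow> g u \<le> g w"
    by (auto simp: argmax_on_def)
  show "\<exists>w\<in>argmax_on g S. w \<le> v"
  proof (cases "w \<le> v")
    case False
    have "0 < f v"
      using pos f_le by force
    have "g w * f v \<le> g v * f w"
      using False \<open>v \<in> S\<close> \<open>w \<in> S\<close> by (intro cross) auto
    also have "\<dots> \<le> g v * f v"
      using \<open>w \<in> S\<close> \<open>v \<in> S\<close> by (intro mult_left_mono f_le nonneg)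
    finally have "g w \<le> g v"
      using \<open>0 < f v\<close> by simp
    then have "v \<in> argmax_on g S"
      using \<open>v \<in> S\<close> g_le by (force simp: argmax_on_def)
    then show ?thesis
      by blast
  qed (use w in blast)
qed

lemma argmax_shifts_left_iterate:
  fixes \<phi> :: "int \<Rightarrow> nat \<Rightarrow> real \<Rightarrow> real"
  assumes step: "\<And>r m. r \<le> int m \<Longrightarrow> argmax_shifts_left (\<phi> (r + 1) (Suc m)) (\<phi> r m) S"
    and "r \<le> int m" "a \<le> m"
  shows "argmax_shifts_left (\<phi> r m) (\<phi> (r - int a) (m - a)) S"
  using \<open>a \<le> m\<close>
proof (induction a)
  case 0
  show ?case
    by (simp add: argmax_shifts_left_refl)
next
  case (Suc a)
  have "argmax_shifts_left (\<phi> (r - int (Suc a) + 1) (Suc (m - Suc a))) (\<phi> (r - int (Suc a)) (m - Suc a)) S"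
    using Suc.prems \<open>r \<le> int m\<close> by (intro step) auto
  moreover have "r - int (Suc a) + 1 = r - int a" "Suc (m - Suc a) = m - a"
    using Suc.prems by auto
  ultimately show ?case
    using Suc by (auto intro: argmax_shifts_left_trans)
qed

lemma argmax_shifts_left_binom_tail_lower:
  assumes "0 < q" "q \<le> 1" "r \<le> int m"
  shows "argmax_shifts_left (\<lambda>v. binom_tail (r + 1) (Suc m) v * (q - v)) (\<lambda>v. binom_tail r m v * (q - v)) {0..q}"
proof (rule argmax_shifts_left_if_cross)
  show "argmax_on (\<lambda>v. binom_tail r m v * (q - v)) {0..q} \<noteq> {}"
    using assms by (intro argmax_on_Icc_nonempty continuous_intros continuous_on_binom_tail) auto
  have "0 < binom_tail (r + 1) (Suc m) (q / 2)"
    using assms by (intro binom_tail_pos) auto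
  then show "\<exists>u\<in>{0..q}. 0 < binom_tail (r + 1) (Suc m) u * (q - u)"
    using assms by (intro bexI[of _ "q / 2"]) auto
next
  fix v w
  assume "v \<in> {0..q}" "w \<in> {0..q}" "v \<le> w"
  then show "binom_tail r m w * (q - w) * (binom_tail (r + 1) (Suc m) v * (q - v))
    \<le> binom_tail r m v * (q - v) * (binom_tail (r + 1) (Suc m) w * (q - w))"
    using assms mult_right_mono[OF binom_tail_cross[of v w r m], of "(q - v) * (q - w)"]
    by (simp add: mult_ac)
qed (use assms in \<open>auto intro!: mult_nonneg_nonneg binom_tail_nonneg\<close>)

lemma argmax_shifts_left_binom_tail_upper:
  assumes "0 \<le> q" "q < 1"
  shows "argmax_shifts_left (\<lambda>v. (1 - binom_tail (r + 1) (Suc m) v) * (v - q)) (\<lambda>v. (1 - binom_tail r m v) * (v - q)) {q..1}"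
proof (cases "r < 0")
  case True
  then show ?thesis
    by (simp add: binom_tail_nonpos argmax_shifts_left_refl)
next
  case False
  show ?thesis
  proof (rule argmax_shifts_left_if_cross)
    show "argmax_on (\<lambda>v. (1 - binom_tail r m v) * (v - q)) {q..1} \<noteq> {}"
      using assms by (intro argmax_on_Icc_nonempty continuous_intros continuous_on_binom_tail) auto
    have "binom_tail (r + 1) (Suc m) ((q + 1) / 2) < 1"
      using assms False by (intro binom_tail_less_1) auto
    then show "\<exists>u\<in>{q..1}. 0 < (1 - binom_tail (r + 1) (Suc m) u) * (u - q)"
      using assms by (intro bexI[of _ "(q + 1) / 2"]) auto
  next
    fix v w
    assume "v \<in> {q..1}" "w \<in> {q..1}" "v \<le> w"
    then show "(1 - binom_tail r m w) * (w - q) * ((1 - binom_tail (r + 1) (Suc m) v) * (v - q))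
      \<le> (1 - binom_tail r m v) * (v - q) * ((1 - binom_tail (r + 1) (Suc m) w) * (w - q))"
      using assms mult_right_mono[OF one_minus_binom_tail_cross[of v w r m], of "(v - q) * (w - q)"]
      by (simp add: mult_ac)
  qed (use assms in \<open>auto intro!: mult_nonneg_nonneg simp: binom_tail_le_1\<close>)
qed

lemma Inf_argmax_binom_tail_lower_mono:
  assumes "0 < q" "q \<le> 1" "r \<le> int m" "a \<le> m"
  shows "Inf (argmax_on (\<lambda>v. binom_tail (r - int a) (m - a) v * (q - v)) {0..q})
    \<le> Inf (argmax_on (\<lambda>v. binom_tail r m v * (q - v)) {0..q})"
proof (rule Inf_argmax_le_if_shifts_left)
  show "argmax_shifts_left (\<lambda>v. binom_tail r m v * (q - v)) (\<lambda>v. binom_tail (r - int a) (m - a) v * (q - v)) {0..q}"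
    by (rule argmax_shifts_left_iterate[where \<phi> = "\<lambda>r m v. binom_tail r m v * (q - v)"])
      (use assms in \<open>auto intro: argmax_shifts_left_binom_tail_lower\<close>)
  show "argmax_on (\<lambda>v. binom_tail r m v * (q - v)) {0..q} \<noteq> {}"
    using assms by (intro argmax_on_Icc_nonempty continuous_intros continuous_on_binom_tail) auto
qed simp

lemma Inf_argmax_binom_tail_upper_mono:
  assumes "0 \<le> q" "q < 1" "r \<le> int m" "a \<le> m"
  shows "Inf (argmax_on (\<lambda>v. (1 - binom_tail (r - int a) (m - a) v) * (v - q)) {q..1})
    \<le> Inf (argmax_on (\<lambda>v. (1 - binom_tail r m v) * (v - q)) {q..1})"
proof (rule Inf_argmax_le_if_shifts_left)
  show "argmax_shifts_left (\<lambda>v. (1 - binom_tail r m v) * (v - q)) (\<lambda>v. (1 - binom_tail (r - int a) (m - a) v) * (v - q)) {q..1}"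
    by (rule argmax_shifts_left_iterate[where \<phi> = "\<lambda>r m v. (1 - binom_tail r m v) * (v - q)"])
      (use assms in \<open>auto intro: argmax_shifts_left_binom_tail_upper\<close>)
  show "argmax_on (\<lambda>v. (1 - binom_tail r m v) * (v - q)) {q..1} \<noteq> {}"
    using assms by (intro argmax_on_Icc_nonempty continuous_intros continuous_on_binom_tail) auto
qed simp

lemma sigma_mono: "i \<le> j \<Longrightarrow> sigma ns i \<le> sigma ns j"
  unfolding sigma_def by (intro sum_mono2) auto

lemma argmax_on_Psi_BSAA_below_q:
  "argmax_on (Psi_BSAA q ns K k) {0..q} = argmax_on
    (\<lambda>v. binom_tail (\<lceil>q * real (sigma ns K)\<rceil> - int (sigma ns k)) (sigma ns K - sigma ns k) v * (q - v)) {0..q}"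
  by (rule argmax_on_cong) (simp add: Psi_BSAA_def Let_def algebra_simps)

lemma argmax_on_Psi_BSAA_above_q:
  "argmax_on (Psi_BSAA q ns K k) {q..1} = argmax_on
    (\<lambda>v. (1 - binom_tail (\<lceil>q * real (sigma ns K)\<rceil> - int (sigma ns k)) (sigma ns K - sigma ns k) v) * (v - q)) {q..1}"
  by (rule argmax_on_cong) (simp add: Psi_BSAA_def Let_def)

theorem lemma4:
  fixes c_u c_o q :: real and K :: nat and ns :: "nat \<Rightarrow> nat"
  assumes "c_u > 0" and "c_o > 0" and "q = c_u / (c_u + c_o)"
    and "K \<ge> 1" and "\<forall>k\<in>{1..K}. ns k \<ge> 1"
  shows "\<forall>i j. i \<le> j \<and> j \<le> K \<longrightarrow>
           Inf (argmax_on (Psi_BSAA q ns K j) {0..q}) \<le> Inf (argmax_on (Psi_BSAA q ns K i) {0..q})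
         \<and> Inf (argmax_on (Psi_BSAA q ns K j) {q..1}) \<le> Inf (argmax_on (Psi_BSAA q ns K i) {q..1})"
proof (intro allI impI)
  fix i j
  assume ij: "i \<le> j \<and> j \<le> K"
  have q: "0 < q" "q < 1"
    using assms(1-3) by (simp_all add: divide_less_eq)
  define N where "N = sigma ns K"
  define r where "r = \<lceil>q * real N\<rceil> - int (sigma ns i)"
  define m where "m = N - sigma ns i"
  define a where "a = sigma ns j - sigma ns i"
  have "sigma ns i \<le> sigma ns j" "sigma ns j \<le> N"
    using ij unfolding N_def by (auto intro: sigma_mono)
  moreover have "\<lceil>q * real N\<rceil> \<le> int N"
    using q by (simp add: ceiling_le_iff mult_left_le_one_le)
  ultimately have "r \<le> int m" "a \<le> m"
    and j_params: "\<lceil>q * real N\<rceil> - int (sigma ns j) = r - int a" "N - sigma ns j = m - a"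
    unfolding r_def m_def a_def by auto
  show "Inf (argmax_on (Psi_BSAA q ns K j) {0..q}) \<le> Inf (argmax_on (Psi_BSAA q ns K i) {0..q})
    \<and> Inf (argmax_on (Psi_BSAA q ns K j) {q..1}) \<le> Inf (argmax_on (Psi_BSAA q ns K i) {q..1})"
    unfolding argmax_on_Psi_BSAA_below_q argmax_on_Psi_BSAA_above_q
    unfolding N_def[symmetric] j_params r_def[symmetric] m_def[symmetric]
    using q \<open>r \<le> int m\<close> \<open>a \<le> m\<close>
    by (simp add: Inf_argmax_binom_tail_lower_mono Inf_argmax_binom_tail_upper_mono)
qed

end
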